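(* For each GES $\gamma=(E,\#,\to,\lhd)$ there is an RCES $\rho$ (over the same event set $E$) such that $\gamma$ and $\rho$ are transition equivalent.
   Context: GES: $\gamma=(E,\#,\to,\lhd)$ with $\#\subseteq E^2$ irreflexive symmetric, $\to\subseteq E^2$ a binary relation (initial causality), $\lhd\subseteq E^3$ where $(c,m,t)\in\lhd$ means "$m$ adds $c$ as a cause of $t$", requiring $\neg(c\to t)$. $\mathrm{ic}(e)=\{e'\mid e'\to e\}$, $\mathrm{ac}(H,e)=\{e'\mid\exists a\in H.(e',a,e)\in\lhd\}$. For $X,Y\subseteq E$, $X\to_g Y$ iff $X\subseteq Y$, $\neg(e\#e')$ for all $e,e'\in Y$, $\mathrm{ic}(e)\cup\mathrm{ac}(X,e)\subseteq X$ for all $e\in Y\setminus X$, and for all $t,m\in Y\setminus X$ and $c\in E$, $(c,m,t)\in\lhd$ implies $c\in X$. RCES: a pair $\rho=(E,\vdash)$ with $\vdash\subseteq 2^E\times 2^E$; for $X,Y\subseteq E$, $X\to_{rc}Y$ iff $X\subseteq Y$ and for every $Z\subseteq Y$ there is $W\subseteq X$ with $W\vdash Z$. For an event structure $\mu$ with transition relation $\to_\mu$ on subsets of its events, $\mathcal{C}(\mu)$ is the set of sets reachable from $\emptyset$ by finitely many $\to_\mu$-steps. Two such structures $\mu,\mu'$ are transition equivalent iff $\mathcal{C}(\mu)=\mathcal{C}(\mu')$ and for all $X,Y\in\mathcal{C}(\mu)$: $X\to_\mu Y$ iff $X\to_{\mu'}Y$. *)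

theory Defs
  imports Main
begin

text \<open>A GES over event set E: conflict relation C, initial causality R,
  adding relation A, where (c,m,t) in A means m adds c as a cause of t.\<close>

definition is_GES :: "'a set \<Rightarrow> ('a \<times> 'a) set \<Rightarrow> ('a \<times> 'a) set \<Rightarrow> ('a \<times> 'a \<times> 'a) set \<Rightarrow> bool" where
  "is_GES E C R A \<longleftrightarrow>
     C \<subseteq> E \<times> E \<and> irrefl C \<and> sym C \<and>
     R \<subseteq> E \<times> E \<and> A \<subseteq> E \<times> E \<times> E \<and>
     (\<forall>c m t. (c, m, t) \<in> A \<longrightarrow> (c, t) \<notin> R)"

definition ic :: "('a \<times> 'a) set \<Rightarrow> 'a \<Rightarrow> 'a set" where
  "ic R e = {e'. (e', e) \<in> R}"

definition ac :: "('a \<times> 'a \<times> 'a) set \<Rightarrow> 'a set \<Rightarrow> 'a \<Rightarrow> 'a set" where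
  "ac A H e = {e'. \<exists>a\<in>H. (e', a, e) \<in> A}"

definition ges_trans :: "'a set \<Rightarrow> ('a \<times> 'a) set \<Rightarrow> ('a \<times> 'a) set \<Rightarrow> ('a \<times> 'a \<times> 'a) set
    \<Rightarrow> 'a set \<Rightarrow> 'a set \<Rightarrow> bool" where
  "ges_trans E C R A X Y \<longleftrightarrow>
     X \<subseteq> E \<and> Y \<subseteq> E \<and> X \<subseteq> Y \<and>
     (\<forall>e\<in>Y. \<forall>e'\<in>Y. (e, e') \<notin> C) \<and>
     (\<forall>e\<in>Y - X. ic R e \<union> ac A X e \<subseteq> X) \<and>
     (\<forall>t\<in>Y - X. \<forall>m\<in>Y - X. \<forall>c. (c, m, t) \<in> A \<longrightarrow> c \<in> X)"

definition is_RCES :: "'a set \<Rightarrow> ('a set \<times> 'a set) set \<Rightarrow> bool" where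
  "is_RCES E V \<longleftrightarrow> V \<subseteq> Pow E \<times> Pow E"

definition rc_trans :: "'a set \<Rightarrow> ('a set \<times> 'a set) set \<Rightarrow> 'a set \<Rightarrow> 'a set \<Rightarrow> bool" where
  "rc_trans E V X Y \<longleftrightarrow>
     X \<subseteq> E \<and> Y \<subseteq> E \<and> X \<subseteq> Y \<and>
     (\<forall>Z. Z \<subseteq> Y \<longrightarrow> (\<exists>W. W \<subseteq> X \<and> (W, Z) \<in> V))"

definition configs :: "('a set \<Rightarrow> 'a set \<Rightarrow> bool) \<Rightarrow> 'a set set" where
  "configs T = {Y. T\<^sup>*\<^sup>* {} Y}"

definition trans_equiv :: "('a set \<Rightarrow> 'a set \<Rightarrow> bool) \<Rightarrow> ('a set \<Rightarrow> 'a set \<Rightarrow> bool) \<Rightarrow> bool" where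
  "trans_equiv T T' \<longleftrightarrow> configs T = configs T' \<and>
     (\<forall>X\<in>configs T. \<forall>Y\<in>configs T. T X Y \<longleftrightarrow> T' X Y)"

end

theory Submission
  imports Defs
begin

text \<open>Let W enable Z when Z is conflict-free and every event of Z outside W has its initial
  causes, and all causes added to it by events of Z, inside W. For a step X \<subseteq> Y one may take
  W = X for every Z \<subseteq> Y: an added cause of e \<in> Y - X contributed by a modifier m \<in> Z lies in X
  whether m \<in> X (by the ic/ac condition) or m \<in> Y - X (by the last GES condition). Conversely
  the single enabling of Z = Y recovers all GES conditions, so both structures have the same
  transition relation.\<close>

definition ges_enabling :: "'a set \<Rightarrow> ('a \<times> 'a) set \<Rightarrow> ('a \<times> 'a) set \<Rightarrow> ('a \<times> 'a \<times> 'a) set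
    \<Rightarrow> ('a set \<times> 'a set) set" where
  "ges_enabling E C R A = {(W, Z). W \<subseteq> E \<and> Z \<subseteq> E \<and> (\<forall>e\<in>Z. \<forall>e'\<in>Z. (e, e') \<notin> C) \<and>
     (\<forall>e\<in>Z - W. ic R e \<subseteq> W \<and> ac A Z e \<subseteq> W)}"

lemma is_RCES_ges_enabling: "is_RCES E (ges_enabling E C R A)"
  unfolding is_RCES_def ges_enabling_def by auto

lemma ac_mono: "X \<subseteq> Y \<Longrightarrow> ac A X e \<subseteq> ac A Y e"
  unfolding ac_def by auto

lemma rc_trans_ges_enabling_imp_ges_trans:
  assumes "rc_trans E (ges_enabling E C R A) X Y"
  shows "ges_trans E C R A X Y"
proof -
  from assms have XY: "X \<subseteq> E" "Y \<subseteq> E" "X \<subseteq> Y"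
    unfolding rc_trans_def by auto
  from assms obtain W where "W \<subseteq> X" and W: "(W, Y) \<in> ges_enabling E C R A"
    unfolding rc_trans_def by blast
  have causes: "ic R e \<subseteq> X" "ac A Y e \<subseteq> X" if "e \<in> Y - X" for e
  proof -
    have "e \<in> Y - W" using that \<open>W \<subseteq> X\<close> by blast
    then show "ic R e \<subseteq> X" "ac A Y e \<subseteq> X"
      using W \<open>W \<subseteq> X\<close> unfolding ges_enabling_def by blast+
  qed
  have "ic R e \<union> ac A X e \<subseteq> X" if "e \<in> Y - X" for e
    using causes[OF that] ac_mono[OF \<open>X \<subseteq> Y\<close>] by blast
  moreover have "c \<in> X" if "t \<in> Y - X" "m \<in> Y - X" "(c, m, t) \<in> A" for t m c
    using causes(2)[OF that(1)] that(2,3) unfolding ac_def by blast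
  moreover have "\<forall>e\<in>Y. \<forall>e'\<in>Y. (e, e') \<notin> C"
    using W unfolding ges_enabling_def by auto
  ultimately show ?thesis
    using XY unfolding ges_trans_def by blast
qed

lemma ges_trans_imp_rc_trans_ges_enabling:
  assumes g: "ges_trans E C R A X Y"
  shows "rc_trans E (ges_enabling E C R A) X Y"
proof -
  have "(X, Z) \<in> ges_enabling E C R A" if "Z \<subseteq> Y" for Z
  proof -
    have "ac A Z e \<subseteq> X" if e: "e \<in> Z - X" for e
    proof
      fix c assume "c \<in> ac A Z e"
      then obtain m where m: "m \<in> Z" "(c, m, e) \<in> A" unfolding ac_def by auto
      have "e \<in> Y - X" using e \<open>Z \<subseteq> Y\<close> by auto
      show "c \<in> X"
      proof (cases "m \<in> X")
        case True
        then have "c \<in> ac A X e" using m unfolding ac_def by auto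
        then show ?thesis using g \<open>e \<in> Y - X\<close> unfolding ges_trans_def by blast
      next
        case False
        then have "m \<in> Y - X" using m \<open>Z \<subseteq> Y\<close> by auto
        then show ?thesis using g \<open>e \<in> Y - X\<close> m unfolding ges_trans_def by blast
      qed
    qed
    then show ?thesis
      using g \<open>Z \<subseteq> Y\<close> unfolding ges_trans_def ges_enabling_def by blast
  qed
  then show ?thesis
    using g unfolding ges_trans_def rc_trans_def by blast
qed

lemma rc_trans_ges_enabling: "rc_trans E (ges_enabling E C R A) = ges_trans E C R A"
  using rc_trans_ges_enabling_imp_ges_trans ges_trans_imp_rc_trans_ges_enabling by blast

lemma trans_equiv_refl: "trans_equiv T T"
  unfolding trans_equiv_def by blast

theorem lemma14:
  fixes E :: "'a set" and C R :: "('a \<times> 'a) set" and A :: "('a \<times> 'a \<times> 'a) set"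
  assumes "is_GES E C R A"
  shows "\<exists>V. is_RCES E V \<and> trans_equiv (ges_trans E C R A) (rc_trans E V)"
  using is_RCES_ges_enabling rc_trans_ges_enabling trans_equiv_refl by metis

end
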